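(* Fix $p\ge 2$. For any $c_1,c_2>0$ such that $N_p^{c_1}$ and $N_p^{c_2}$ both exist, one of them is contained in the other (the family of all existing sets $N_p^c$ is totally ordered by inclusion), and $\bigcup_{c} N_p^c\subset D_a(0)$, the union being over all $c>0$ for which $N_p^c$ exists.
   Context: Let $f:\mathbb{R}^n\to\mathbb{R}^n$ be real-analytic with $f(0)=0$, and assume all eigenvalues of $A=\frac{\partial f}{\partial x}(0)$ have negative real parts. $D_a(0)$ is the domain of attraction of the steady state $0$ of $\dot x=f(x)$ (initial states whose solutions are defined for all $t\ge0$ and tend to $0$). $\|\cdot\|$ is the Euclidean norm. Let $V$ be the real-analytic function on a neighborhood of $0$ with $\langle\nabla V(x),f(x)\rangle=-\|x\|^2$, $V(0)=0$, and for $p\ge 2$ let $V_p$ be the Taylor polynomial of $V$ at $0$ of degree $p$ (terms of degrees $2,\dots,p$). Let $G_p$ be the maximal domain (connected open set) containing $0$ such that $V_p(x)>0$ and $\langle\nabla V_p(x),f(x)\rangle<0$ for all $x\in G_p\setminus\{0\}$. A closed connected set $S\subset\mathbb{R}^n$ is called $(p,c)$-admissible if: $0\in\mathrm{Int}(S)$; $V_p(x)<c$ for all $x\in\mathrm{Int}(S)$; $V_p(x)=c$ for all $x\in\partial S$; and $S$ is compact with $S\subset G_p$. For given $p,c$ there is at most one such set; when it exists it is denoted $N_p^c$. *)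

theory Defs
  imports "HOL-Analysis.Analysis"
begin

definition mono_at :: "('n::finite \<Rightarrow> nat) \<Rightarrow> real^'n \<Rightarrow> real^'n \<Rightarrow> real" where
  "mono_at \<alpha> a x = (\<Prod>i\<in>UNIV. (x$i - a$i) ^ \<alpha> i)"

definition mdeg :: "('n::finite \<Rightarrow> nat) \<Rightarrow> nat" where
  "mdeg \<alpha> = (\<Sum>i\<in>UNIV. \<alpha> i)"

text \<open>Real-analytic scalar function on a set U: locally the (unconditionally,
  hence absolutely) convergent sum of a multivariate power series.\<close>

definition real_analytic_on :: "(real^'n::finite \<Rightarrow> real) \<Rightarrow> (real^'n) set \<Rightarrow> bool" where
  "real_analytic_on g U \<longleftrightarrow>
     (\<forall>a\<in>U. \<exists>r>0. \<exists>c :: ('n \<Rightarrow> nat) \<Rightarrow> real.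
        \<forall>x\<in>ball a r. ((\<lambda>\<alpha>. c \<alpha> * mono_at \<alpha> a x) has_sum g x) UNIV)"

definition real_analytic_vf :: "(real^'n::finite \<Rightarrow> real^'n) \<Rightarrow> bool" where
  "real_analytic_vf f \<longleftrightarrow> (\<forall>k. real_analytic_on (\<lambda>x. f x $ k) UNIV)"

definition power_series_at0 :: "(('n::finite \<Rightarrow> nat) \<Rightarrow> real) \<Rightarrow> (real^'n \<Rightarrow> real) \<Rightarrow> bool" where
  "power_series_at0 c V \<longleftrightarrow>
     (\<exists>r>0. \<forall>x\<in>ball 0 r. ((\<lambda>\<alpha>. c \<alpha> * mono_at \<alpha> 0 x) has_sum V x) UNIV)"

definition taylor_poly :: "(('n::finite \<Rightarrow> nat) \<Rightarrow> real) \<Rightarrow> nat \<Rightarrow> real^'n \<Rightarrow> real" where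
  "taylor_poly c p x = (\<Sum>\<alpha>\<in>{\<alpha>. 2 \<le> mdeg \<alpha> \<and> mdeg \<alpha> \<le> p}. c \<alpha> * mono_at \<alpha> 0 x)"

definition complex_eigenvalue :: "real^'n^'n \<Rightarrow> complex \<Rightarrow> bool" where
  "complex_eigenvalue A mu \<longleftrightarrow>
     (\<exists>v :: complex^'n. v \<noteq> 0 \<and>
        (\<chi> i. \<Sum>j\<in>UNIV. complex_of_real (A$i$j) * v$j) = (\<chi> i. mu * v$i))"

definition domain_of_attraction :: "(real^'n::finite \<Rightarrow> real^'n) \<Rightarrow> (real^'n) set" where
  "domain_of_attraction f =
     {x0. \<exists>\<phi> :: real \<Rightarrow> real^'n. \<phi> 0 = x0 \<and>
        (\<forall>t\<ge>0. (\<phi> has_vector_derivative f (\<phi> t)) (at t within {0..})) \<and>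
        (\<phi> \<longlongrightarrow> 0) at_top}"

definition max_domain :: "(real^'n::finite \<Rightarrow> real) \<Rightarrow> (real^'n \<Rightarrow> real^'n) \<Rightarrow> (real^'n) set" where
  "max_domain W f = \<Union>{U. open U \<and> connected U \<and> 0 \<in> U \<and>
       (\<forall>x\<in>U - {0}. W x > 0 \<and> frechet_derivative W (at x) (f x) < 0)}"

definition admissible :: "(real^'n::finite \<Rightarrow> real) \<Rightarrow> (real^'n \<Rightarrow> real^'n) \<Rightarrow> real \<Rightarrow> (real^'n) set \<Rightarrow> bool" where
  "admissible W f c S \<longleftrightarrow>
     closed S \<and> connected S \<and> 0 \<in> interior S \<and>
     (\<forall>x\<in>interior S. W x < c) \<and> (\<forall>x\<in>frontier S. W x = c) \<and>
     compact S \<and> S \<subseteq> max_domain W f"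

end

theory Submission
  imports Defs
begin

(* Both parts only use that W = V_p is a C^1 function with W 0 = 0 and that f is locally
   Lipschitz (a consequence of analyticity) with f 0 = 0.

   At a boundary point q of an admissible set S the derivative of W along f q is negative.
   Pushing the points near q along the ray in direction f q shows that near q the set
   {W < c} lies in a connected subset of {W < c}, whose closure contains the nearby points
   of {W <= c}. As this connected set meets the interior of S and avoids the level W = c,
   it lies in the interior of S. Hence S is the closure of its interior, and a connectedness
   argument shows that admissible sets for levels c1 <= c2 are nested.

   For attraction, replace f by a globally Lipschitz field that agrees with f on a ball
   containing S and solve by Picard iteration. The solution cannot leave S: on the level
   W = c it moves into the interior. Along it W is nonincreasing, and on the compact parts
   of S where W >= eta > 0 the derivative of W along f is bounded away from 0, so W tends to 0
   along the solution, and so does the solution itself. *)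

section \<open>Solutions of globally Lipschitz autonomous equations\<close>

lemma has_integral_power_div_fact:
  fixes t :: real
  assumes "0 \<le> t"
  shows "((\<lambda>s. s^k / fact k) has_integral t^Suc k / fact (Suc k)) {0..t}"
proof -
  have "((\<lambda>s. s^Suc k / fact (Suc k)) has_real_derivative
      real (Suc k) * x^(Suc k - Suc 0) / fact (Suc k)) (at x within {0..t})" for x
    by (intro DERIV_cdivide DERIV_pow[THEN has_field_derivative_at_within])
  moreover have "real (Suc k) * x^(Suc k - Suc 0) / fact (Suc k) = x^k / fact k" for x :: real
    by (simp del: of_nat_Suc)
  ultimately have "((\<lambda>s. s^Suc k / fact (Suc k)) has_vector_derivative x^k / fact k) (at x within {0..t})" for x
    by (metis has_real_derivative_iff_has_vector_derivative)
  from fundamental_theorem_of_calculus[OF assms this]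
  show ?thesis by simp
qed

primrec picard_iterate :: "('a::euclidean_space \<Rightarrow> 'a) \<Rightarrow> 'a \<Rightarrow> nat \<Rightarrow> real \<Rightarrow> 'a" where
  "picard_iterate g x0 0 = (\<lambda>t. x0)"
| "picard_iterate g x0 (Suc k) = (\<lambda>t. x0 + integral {0..t} (\<lambda>s. g (picard_iterate g x0 k s)))"

declare picard_iterate.simps(2) [simp del]

context
  fixes g :: "'a::euclidean_space \<Rightarrow> 'a" and L :: real and x0 :: 'a
  assumes lipschitz: "L-lipschitz_on UNIV g"
begin

private abbreviation "\<phi> \<equiv> picard_iterate g x0"

private lemma continuous_g: "continuous_on UNIV g"
  using lipschitz by (rule lipschitz_on_continuous_on)

private lemma continuous_on_g_comp:
  "continuous_on {0..T} u \<Longrightarrow> continuous_on {0..T} (\<lambda>s. g (u s))"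
  using continuous_on_compose2[OF continuous_g] by blast

lemma continuous_on_picard_iterate: "continuous_on {0..T} (picard_iterate g x0 k)"
proof (induction k)
  case (Suc k)
  have "continuous_on {0..T} (\<lambda>t. integral {0..t} (\<lambda>s. g (\<phi> k s)))"
    using Suc by (intro indefinite_integral_continuous_1 integrable_continuous_real continuous_on_g_comp)
  then show ?case by (auto simp: picard_iterate.simps intro: continuous_intros)
qed simp

lemma integrable_picard_iterate: "(\<lambda>s. g (picard_iterate g x0 k s)) integrable_on {0..t}"
  by (intro integrable_continuous_real continuous_on_g_comp continuous_on_picard_iterate)

lemma picard_iterate_step_bound:
  assumes "0 \<le> t"
  shows "norm (\<phi> (Suc k) t - \<phi> k t) \<le> norm (g x0) * L^k * (t^Suc k / fact (Suc k))"
  using assms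
proof (induction k arbitrary: t)
  case (Suc k)
  have L: "0 \<le> L" using lipschitz by (rule lipschitz_on_nonneg)
  let ?bound = "\<lambda>s. norm (g x0) * L^Suc k * (s^Suc k / fact (Suc k))"
  have "\<phi> (Suc (Suc k)) t - \<phi> (Suc k) t
      = integral {0..t} (\<lambda>s. g (\<phi> (Suc k) s)) - integral {0..t} (\<lambda>s. g (\<phi> k s))"
    by (simp only: picard_iterate.simps(2)) simp
  also have "\<dots> = integral {0..t} (\<lambda>s. g (\<phi> (Suc k) s) - g (\<phi> k s))"
    by (rule integral_diff[symmetric]) (rule integrable_picard_iterate)+
  also have "norm \<dots> \<le> integral {0..t} ?bound"
  proof (rule integral_norm_bound_integral)
    fix s assume s: "s \<in> {0..t}"
    have "norm (g (\<phi> (Suc k) s) - g (\<phi> k s)) \<le> L * norm (\<phi> (Suc k) s - \<phi> k s)"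
      using lipschitz_on_normD[OF lipschitz] by blast
    also have "\<dots> \<le> L * (norm (g x0) * L^k * (s^Suc k / fact (Suc k)))"
      using Suc.IH[of s] s L by (intro mult_left_mono) auto
    also have "\<dots> = ?bound s"
      by (simp del: fact_Suc)
    finally show "norm (g (\<phi> (Suc k) s) - g (\<phi> k s)) \<le> ?bound s" .
  next
    show "(\<lambda>s. g (\<phi> (Suc k) s) - g (\<phi> k s)) integrable_on {0..t}"
      by (intro integrable_diff integrable_picard_iterate)
    show "?bound integrable_on {0..t}"
      by (intro integrable_continuous_real continuous_intros) (simp del: fact_Suc)
  qed
  also have "\<dots> = norm (g x0) * L^Suc k * (t^Suc (Suc k) / fact (Suc (Suc k)))"
    by (intro integral_unique has_integral_mult_right has_integral_power_div_fact Suc.prems)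
  finally show ?case .
qed (simp add: picard_iterate.simps)

lemma picard_iterate_uniform_limit:
  obtains \<Phi> where "\<And>T. uniform_limit {0..T} (picard_iterate g x0) \<Phi> sequentially"
proof
  fix T :: real
  define M where "M k = (norm (g x0) * T) * ((L * T)^k /\<^sub>R fact k)" for k
  have "uniform_limit {0..T} (\<lambda>n t. \<Sum>i<n. \<phi> (Suc i) t - \<phi> i t) (\<lambda>t. \<Sum>i. \<phi> (Suc i) t - \<phi> i t) sequentially"
  proof (rule Weierstrass_m_test)
    show "summable M"
      unfolding M_def by (intro summable_mult summable_exp_generic)
    fix k t assume t: "t \<in> {0..T}"
    have L: "0 \<le> L" using lipschitz by (rule lipschitz_on_nonneg)
    have "t^Suc k / fact (Suc k) \<le> T^Suc k / fact k"
      using t by (intro frac_le power_mono fact_mono) auto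
    then have "norm (g x0) * L^k * (t^Suc k / fact (Suc k)) \<le> norm (g x0) * L^k * (T^Suc k / fact k)"
      using L by (intro mult_left_mono) auto
    also have "\<dots> = M k"
      by (simp add: M_def power_mult_distrib divide_simps)
    finally show "norm (\<phi> (Suc k) t - \<phi> k t) \<le> M k"
      using picard_iterate_step_bound[of t k] t by simp
  qed
  moreover have "(\<Sum>i<n. \<phi> (Suc i) t - \<phi> i t) = \<phi> n t - x0" for n t
    unfolding sum_lessThan_telescope[of "\<lambda>i. \<phi> i t"] by simp
  ultimately show "uniform_limit {0..T} \<phi> (\<lambda>t. x0 + (\<Sum>i. \<phi> (Suc i) t - \<phi> i t)) sequentially"
    by (simp add: uniform_limit_iff dist_norm algebra_simps)
qed

lemma lipschitz_ode_solution_exists: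
  obtains \<Phi> where "\<Phi> 0 = x0" "\<And>t. t \<ge> 0 \<Longrightarrow> (\<Phi> has_vector_derivative g (\<Phi> t)) (at t within {0..})"
proof -
  obtain \<Phi> where lim: "\<And>T. uniform_limit {0..T} \<phi> \<Phi> sequentially"
    using picard_iterate_uniform_limit by blast
  have cont: "continuous_on {0..T} \<Phi>" for T
    by (rule uniform_limit_theorem[OF _ lim]) (auto intro!: always_eventually continuous_on_picard_iterate)
  have integral_eq: "\<Phi> t = x0 + integral {0..t} (\<lambda>s. g (\<Phi> s))" if "t \<ge> 0" for t
  proof -
    have "uniform_limit {0..t} (\<lambda>n s. g (\<phi> n s)) (\<lambda>s. g (\<Phi> s)) sequentially"
      by (rule uniform_limit_compose_uniformly_continuous_on[OF lim, where B=UNIV])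
         (auto intro: lipschitz_on_uniformly_continuous[OF lipschitz])
    then obtain I J where I: "\<And>n. ((\<lambda>s. g (\<phi> n s)) has_integral I n) {0..t}"
      and J: "((\<lambda>s. g (\<Phi> s)) has_integral J) {0..t}" and "I \<longlonglongrightarrow> J"
      by (rule uniform_limit_integral) (auto intro: continuous_on_g_comp continuous_on_picard_iterate)
    then have "(\<lambda>n. \<phi> (Suc n) t) \<longlonglongrightarrow> x0 + J"
      by (auto simp: picard_iterate.simps integral_unique[OF I] intro: tendsto_add)
    moreover have "(\<lambda>n. \<phi> (Suc n) t) \<longlonglongrightarrow> \<Phi> t"
      using LIMSEQ_Suc[OF tendsto_uniform_limitI[OF lim, of t t]] that by simp
    ultimately show ?thesis
      using LIMSEQ_unique integral_unique[OF J] by metis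
  qed
  show ?thesis
  proof
    show "\<Phi> 0 = x0" using integral_eq[of 0] by simp
    fix t :: real assume "0 \<le> t"
    then have t: "t \<in> {0..t + 1}" by simp
    have "((\<lambda>u. x0 + integral {0..u} (\<lambda>s. g (\<Phi> s))) has_vector_derivative g (\<Phi> t)) (at t within {0..t + 1})"
      using integral_has_vector_derivative[OF continuous_on_g_comp[OF cont] t]
      by (auto intro!: derivative_eq_intros)
    then have "(\<Phi> has_vector_derivative g (\<Phi> t)) (at t within {0..t + 1})"
      by (rule has_vector_derivative_transform_within[where d=1]) (use t integral_eq in auto)
    moreover have "at t within {0..t + 1} = at t within {0..}"
      by (rule at_within_nhd[where S="{..<t + 1}"]) auto
    ultimately show "(\<Phi> has_vector_derivative g (\<Phi> t)) (at t within {0..})"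
      by simp
  qed
qed

end

lemma local_lipschitz_extension_from_bounded:
  fixes f :: "'a::euclidean_space \<Rightarrow> 'b::metric_space"
  assumes f_lipschitz: "local_lipschitz (UNIV :: real set) UNIV (\<lambda>_. f)" and "bounded S"
  obtains g L where "L-lipschitz_on UNIV g" "\<And>x. x \<in> S \<Longrightarrow> g x = f x"
proof -
  obtain R where "0 < R" "\<forall>x\<in>S. norm x \<le> R"
    using \<open>bounded S\<close> unfolding bounded_pos by blast
  then have S_R: "S \<subseteq> cball 0 R"
    by auto
  let ?K = "cball (0::'a) R"
  have "local_lipschitz {0::real} ?K (\<lambda>_. f)"
    using f_lipschitz by (rule local_lipschitz_subset) auto
  then obtain L where "L-lipschitz_on ?K f"
    by (rule local_lipschitz_compact_implies_lipschitz) auto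
  have "1-lipschitz_on UNIV (closest_point ?K)"
    using closest_point_lipschitz[of ?K] \<open>0 < R\<close> by (intro lipschitz_onI) auto
  moreover have "L-lipschitz_on (closest_point ?K ` UNIV) f"
    using \<open>L-lipschitz_on ?K f\<close> by (rule lipschitz_on_subset)
      (use closest_point_in_set[of ?K] \<open>0 < R\<close> in auto)
  ultimately have "(L * 1)-lipschitz_on UNIV (f \<circ> closest_point ?K)"
    by (rule lipschitz_on_compose)
  moreover have "(f \<circ> closest_point ?K) x = f x" if "x \<in> S" for x
    using that S_R closest_point_self[of x ?K] by auto
  ultimately show ?thesis
    using that by blast
qed

section \<open>Analytic vector fields are locally Lipschitz\<close>

lemma abs_mono_at_diff_le:
  fixes x y a :: "real^'n::finite" and \<rho> :: real
  assumes "0 < \<rho>" and x: "\<And>i. \<bar>x$i - a$i\<bar> \<le> \<rho>" and y: "\<And>i. \<bar>y$i - a$i\<bar> \<le> \<rho>"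
  shows "\<bar>mono_at \<alpha> a x - mono_at \<alpha> a y\<bar> \<le> mdeg \<alpha> * \<rho>^mdeg \<alpha> * norm (x - y) / \<rho>"
proof -
  define u where "u z i = (z$i - a$i) / \<rho>" for z i
  have mono_at_scaled: "mono_at \<alpha> a z = \<rho>^mdeg \<alpha> * (\<Prod>i\<in>UNIV. u z i ^ \<alpha> i)" for z
  proof -
    have "mono_at \<alpha> a z = (\<Prod>i\<in>UNIV. (\<rho> * u z i) ^ \<alpha> i)"
      using \<open>0 < \<rho>\<close> by (simp add: mono_at_def u_def)
    also have "\<dots> = (\<Prod>i\<in>UNIV. \<rho> ^ \<alpha> i) * (\<Prod>i\<in>UNIV. u z i ^ \<alpha> i)"
      by (simp only: power_mult_distrib prod.distrib)
    finally show ?thesis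
      by (simp add: mdeg_def power_sum)
  qed
  have u_le_1: "\<bar>u x i\<bar> \<le> 1" "\<bar>u y i\<bar> \<le> 1" for i
    using x[of i] y[of i] \<open>0 < \<rho>\<close> by (simp_all add: u_def abs_divide divide_le_eq_1)
  have "\<bar>(\<Prod>i\<in>UNIV. u x i ^ \<alpha> i) - (\<Prod>i\<in>UNIV. u y i ^ \<alpha> i)\<bar>
      \<le> (\<Sum>i\<in>UNIV. \<bar>u x i ^ \<alpha> i - u y i ^ \<alpha> i\<bar>)"
    using norm_prod_diff[of UNIV "\<lambda>i. u x i ^ \<alpha> i" "\<lambda>i. u y i ^ \<alpha> i"] u_le_1
    by (simp add: power_abs power_le_one)
  also have "\<dots> \<le> (\<Sum>i\<in>UNIV. \<alpha> i * (norm (x - y) / \<rho>))"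
  proof (rule sum_mono)
    fix i
    have "\<bar>u x i - u y i\<bar> = \<bar>(x - y)$i\<bar> / \<rho>"
      using \<open>0 < \<rho>\<close> by (simp add: u_def diff_divide_distrib[symmetric] abs_divide)
    also have "\<dots> \<le> norm (x - y) / \<rho>"
      using \<open>0 < \<rho>\<close> by (intro divide_right_mono component_le_norm_cart) simp
    finally have "\<bar>u x i - u y i\<bar> \<le> norm (x - y) / \<rho>" .
    then have "\<alpha> i * \<bar>u x i - u y i\<bar> \<le> \<alpha> i * (norm (x - y) / \<rho>)"
      by (rule mult_left_mono) simp
    with norm_power_diff[of "u x i" "u y i" "\<alpha> i"] u_le_1[of i]
    show "\<bar>u x i ^ \<alpha> i - u y i ^ \<alpha> i\<bar> \<le> \<alpha> i * (norm (x - y) / \<rho>)"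
      by simp
  qed
  also have "\<dots> = mdeg \<alpha> * norm (x - y) / \<rho>"
    by (simp add: mdeg_def sum_distrib_right sum_divide_distrib)
  finally have "\<rho>^mdeg \<alpha> * \<bar>(\<Prod>i\<in>UNIV. u x i ^ \<alpha> i) - (\<Prod>i\<in>UNIV. u y i ^ \<alpha> i)\<bar>
      \<le> \<rho>^mdeg \<alpha> * (mdeg \<alpha> * norm (x - y) / \<rho>)"
    using \<open>0 < \<rho>\<close> by (intro mult_left_mono) auto
  then show ?thesis
    using \<open>0 < \<rho>\<close> by (simp add: mono_at_scaled abs_mult right_diff_distrib[symmetric] mult_ac)
qed

lemma real_analytic_on_lipschitz_near:
  fixes h :: "real^'n::finite \<Rightarrow> real"
  assumes "real_analytic_on h UNIV"
  obtains u L where "0 < u" "L-lipschitz_on (cball a u) h"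
proof -
  obtain r cf where "0 < r"
    and h_sum: "\<And>x. x \<in> ball a r \<Longrightarrow> ((\<lambda>\<alpha>. cf \<alpha> * mono_at \<alpha> a x) has_sum h x) UNIV"
    using assms unfolding real_analytic_on_def by blast
  \<comment> \<open>The point \<open>a + (s, \<dots>, s)\<close> lies in the ball of convergence, so \<open>\<Sum> \<bar>cf \<alpha>\<bar> s\<^bsup>|\<alpha>|\<^esup>\<close> converges;
    it dominates the difference quotients of all monomials on the cube of half the size.\<close>
  define s where "s = r / (2 * CARD('n))"
  have "0 < s" "s \<le> r / 2"
    using \<open>0 < r\<close> by (auto simp: s_def field_simps)
  define y0 where "y0 = a + (\<chi> i. s)"
  have "norm (y0 - a) \<le> CARD('n) * s"
    using norm_le_l1_cart[of "y0 - a"] \<open>0 < s\<close> by (simp add: y0_def)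
  also have "\<dots> < r"
    using \<open>0 < r\<close> by (simp add: s_def)
  finally have "y0 \<in> ball a r"
    by (simp add: dist_norm norm_minus_commute)
  moreover have "mono_at \<alpha> a y0 = s ^ mdeg \<alpha>" for \<alpha>
    by (simp add: mono_at_def mdeg_def y0_def power_sum)
  ultimately have "((\<lambda>\<alpha>. cf \<alpha> * s ^ mdeg \<alpha>) has_sum h y0) UNIV"
    using h_sum[of y0] by simp
  then have "(\<lambda>\<alpha>. cf \<alpha> * s ^ mdeg \<alpha>) summable_on UNIV"
    unfolding summable_on_def by blast
  then have "(\<lambda>\<alpha>. norm (cf \<alpha> * s ^ mdeg \<alpha>)) summable_on UNIV"
    by (rule summable_on_iff_abs_summable_on_real[THEN iffD1])
  then have "(\<lambda>\<alpha>. \<bar>cf \<alpha>\<bar> * s ^ mdeg \<alpha>) summable_on UNIV"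
    using \<open>0 < s\<close> by (simp add: abs_mult)
  then have majorant: "((\<lambda>\<alpha>. 2 / s * dist x y * (\<bar>cf \<alpha>\<bar> * s ^ mdeg \<alpha>))
      has_sum 2 / s * dist x y * (\<Sum>\<^sub>\<infinity>\<alpha>. \<bar>cf \<alpha>\<bar> * s ^ mdeg \<alpha>)) UNIV" for x y
    by (intro has_sum_cmult_right has_sum_infsum)
  define L where "L = 2 / s * (\<Sum>\<^sub>\<infinity>\<alpha>. \<bar>cf \<alpha>\<bar> * s ^ mdeg \<alpha>)"
  show ?thesis
  proof
    show "0 < s / 2" using \<open>0 < s\<close> by simp
    show "L-lipschitz_on (cball a (s / 2)) h"
    proof (rule lipschitz_onI)
      show "0 \<le> L"
        unfolding L_def using \<open>0 < s\<close> by (intro mult_nonneg_nonneg infsum_nonneg) auto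
      fix x y assume "x \<in> cball a (s / 2)" "y \<in> cball a (s / 2)"
      then have near: "\<bar>x$i - a$i\<bar> \<le> s / 2" "\<bar>y$i - a$i\<bar> \<le> s / 2" for i
        using component_le_norm_cart[of "x - a" i] component_le_norm_cart[of "y - a" i]
        by (auto simp: dist_norm norm_minus_commute)
      have "x \<in> ball a r" "y \<in> ball a r"
        using \<open>x \<in> cball a (s / 2)\<close> \<open>y \<in> cball a (s / 2)\<close> \<open>s \<le> r / 2\<close> \<open>0 < s\<close> by auto
      then have diff_sum: "((\<lambda>\<alpha>. cf \<alpha> * mono_at \<alpha> a x - cf \<alpha> * mono_at \<alpha> a y) has_sum h x - h y) UNIV"
        using has_sum_add[OF h_sum has_sum_uminusI[OF h_sum]] by simp
      have termwise: "\<bar>cf \<alpha> * mono_at \<alpha> a x - cf \<alpha> * mono_at \<alpha> a y\<bar>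
          \<le> 2 / s * dist x y * (\<bar>cf \<alpha>\<bar> * s ^ mdeg \<alpha>)" for \<alpha>
      proof -
        have "real (mdeg \<alpha>) \<le> 2 ^ mdeg \<alpha>"
          using less_exp[of "mdeg \<alpha>"] by (metis less_imp_le of_nat_le_iff of_nat_numeral of_nat_power)
        then have "real (mdeg \<alpha>) * (s / 2) ^ mdeg \<alpha> \<le> s ^ mdeg \<alpha>"
          using \<open>0 < s\<close> by (simp add: power_divide field_simps)
        then have "real (mdeg \<alpha>) * (s / 2) ^ mdeg \<alpha> * (2 / s * dist x y) \<le> s ^ mdeg \<alpha> * (2 / s * dist x y)"
          using \<open>0 < s\<close> by (intro mult_right_mono) auto
        moreover have "\<bar>mono_at \<alpha> a x - mono_at \<alpha> a y\<bar> \<le> real (mdeg \<alpha>) * (s / 2) ^ mdeg \<alpha> * (2 / s * dist x y)"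
          using abs_mono_at_diff_le[OF _ near, of \<alpha>] \<open>0 < s\<close> by (simp add: dist_norm mult_ac)
        ultimately have "\<bar>cf \<alpha>\<bar> * \<bar>mono_at \<alpha> a x - mono_at \<alpha> a y\<bar>
            \<le> \<bar>cf \<alpha>\<bar> * (s ^ mdeg \<alpha> * (2 / s * dist x y))"
          by (intro mult_left_mono) auto
        then show ?thesis
          by (simp add: abs_mult right_diff_distrib[symmetric] mult_ac)
      qed
      have "norm (h x - h y) \<le> 2 / s * dist x y * (\<Sum>\<^sub>\<infinity>\<alpha>. \<bar>cf \<alpha>\<bar> * s ^ mdeg \<alpha>)"
        using termwise by (intro norm_infsum_le[OF diff_sum majorant]) simp
      then show "dist (h x) (h y) \<le> L * dist x y"
        by (simp add: L_def dist_real_def algebra_simps)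
    qed
  qed
qed

lemma real_analytic_vf_local_lipschitz:
  fixes f :: "real^'n::finite \<Rightarrow> real^'n"
  assumes "real_analytic_vf f"
  shows "local_lipschitz (UNIV :: real set) UNIV (\<lambda>_. f)"
proof (rule local_lipschitzI)
  fix t :: real and x :: "real^'n"
  have "\<forall>k. \<exists>u L. 0 < u \<and> L-lipschitz_on (cball x u) (\<lambda>z. f z $ k)"
    using assms real_analytic_on_lipschitz_near unfolding real_analytic_vf_def by metis
  then obtain u L where u: "\<And>k. 0 < u k" and L: "\<And>k. (L k)-lipschitz_on (cball x (u k)) (\<lambda>z. f z $ k)"
    by metis
  define u0 where "u0 = Min (range u)"
  have "0 < u0" "\<And>k. u0 \<le> u k"
    using u by (auto simp: u0_def)
  have "(\<Sum>k\<in>UNIV. L k)-lipschitz_on (cball x u0) f"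
  proof (rule lipschitz_onI)
    show "0 \<le> (\<Sum>k\<in>UNIV. L k)"
      using L lipschitz_on_nonneg by (blast intro: sum_nonneg)
    fix y z assume "y \<in> cball x u0" "z \<in> cball x u0"
    then have "y \<in> cball x (u k)" "z \<in> cball x (u k)" for k
      using \<open>\<And>k. u0 \<le> u k\<close> by (auto intro: order_trans)
    then have "dist (f y $ k) (f z $ k) \<le> L k * dist y z" for k
      using L lipschitz_onD by blast
    then have "(\<Sum>k\<in>UNIV. \<bar>(f y - f z)$k\<bar>) \<le> (\<Sum>k\<in>UNIV. L k * dist y z)"
      by (intro sum_mono) (simp add: dist_real_def)
    then show "dist (f y) (f z) \<le> (\<Sum>k\<in>UNIV. L k) * dist y z"
      using norm_le_l1_cart[of "f y - f z"] by (simp add: dist_norm sum_distrib_right)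
  qed
  then show "\<exists>\<delta>>0. \<exists>K. \<forall>s\<in>cball t \<delta> \<inter> UNIV. K-lipschitz_on (cball x \<delta> \<inter> UNIV) ((\<lambda>_. f) s)"
    using \<open>0 < u0\<close> by auto
qed

section \<open>The Taylor polynomial as a \<open>C\<^sup>1\<close> function\<close>

definition taylor_poly_deriv :: "(('n::finite \<Rightarrow> nat) \<Rightarrow> real) \<Rightarrow> nat \<Rightarrow> real^'n \<Rightarrow> real^'n \<Rightarrow> real" where
  "taylor_poly_deriv c p x v = (\<Sum>\<alpha>\<in>{\<alpha>. 2 \<le> mdeg \<alpha> \<and> mdeg \<alpha> \<le> p}. c \<alpha> *
      (\<Sum>i\<in>UNIV. (of_nat (\<alpha> i) * v$i * (x$i)^(\<alpha> i - 1)) * (\<Prod>j\<in>UNIV - {i}. (x$j)^(\<alpha> j))))"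

lemma taylor_poly_eq:
  "taylor_poly c p x = (\<Sum>\<alpha>\<in>{\<alpha>. 2 \<le> mdeg \<alpha> \<and> mdeg \<alpha> \<le> p}. c \<alpha> * (\<Prod>i\<in>UNIV. (x$i)^(\<alpha> i)))"
  by (simp add: taylor_poly_def mono_at_def)

lemma has_derivative_taylor_poly: "(taylor_poly c p has_derivative taylor_poly_deriv c p x) (at x)"
proof -
  have "((\<lambda>x. x$i) has_derivative (\<lambda>v. v$i)) (at x)" for i
    by (rule bounded_linear_imp_has_derivative[OF bounded_linear_vec_nth])
  then have "((\<lambda>x. \<Prod>i\<in>UNIV. (x$i)^(\<alpha> i)) has_derivative
      (\<lambda>v. \<Sum>i\<in>UNIV. (of_nat (\<alpha> i) * v$i * (x$i)^(\<alpha> i - 1)) * (\<Prod>j\<in>UNIV - {i}. (x$j)^(\<alpha> j)))) (at x)" for \<alpha>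
    by (intro has_derivative_prod has_derivative_power)
  then have "((\<lambda>x. \<Sum>\<alpha>\<in>{\<alpha>. 2 \<le> mdeg \<alpha> \<and> mdeg \<alpha> \<le> p}. c \<alpha> * (\<Prod>i\<in>UNIV. (x$i)^(\<alpha> i)))
      has_derivative taylor_poly_deriv c p x) (at x)"
    unfolding taylor_poly_deriv_def by (intro has_derivative_sum has_derivative_mult_right)
  then show ?thesis
    by (simp add: taylor_poly_eq[abs_def])
qed

lemma continuous_on_taylor_poly_deriv: "continuous_on UNIV (\<lambda>x. taylor_poly_deriv c p x v)"
  unfolding taylor_poly_deriv_def by (intro continuous_intros)

lemma taylor_poly_0: "taylor_poly c p 0 = 0"
proof -
  have "(\<Prod>i\<in>UNIV. (0::real)^(\<alpha> i)) = 0" if "2 \<le> mdeg \<alpha>" for \<alpha> :: "'n::finite \<Rightarrow> nat"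
  proof -
    from that obtain i where "\<alpha> i \<noteq> 0"
      unfolding mdeg_def by (metis not_numeral_le_zero sum.neutral)
    then show ?thesis by (intro prod_zero) auto
  qed
  then show ?thesis
    unfolding taylor_poly_eq by (intro sum.neutral) auto
qed

section \<open>Sublevel sets of a \<open>C\<^sup>1\<close> function and admissible sets\<close>

lemma admissible_le:
  assumes "admissible W f c S" "x \<in> S"
  shows "W x \<le> c"
proof -
  have "x \<in> interior S \<or> x \<in> frontier S"
    using assms by (auto simp: admissible_def frontier_def closure_closed)
  then show ?thesis
    using assms(1) unfolding admissible_def by force
qed

lemma connected_subset_closed_if_locally_subset:
  fixes S T :: "'a::metric_space set"
  assumes "connected S" "a \<in> S" "a \<in> T" "closed T"
    and local: "\<And>x. x \<in> S \<Longrightarrow> x \<in> T \<Longrightarrow> \<exists>\<epsilon>>0. \<forall>y\<in>S. dist y x < \<epsilon> \<longrightarrow> y \<in> T"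
  shows "S \<subseteq> T"
proof -
  have "openin (top_of_set S) (S \<inter> T)"
    unfolding openin_euclidean_subtopology_iff using local by (auto simp: dist_commute)
  moreover have "closedin (top_of_set S) (S \<inter> T)"
    using \<open>closed T\<close> by (simp add: closedin_closed_Int)
  ultimately have "S \<inter> T = {} \<or> S \<inter> T = S"
    using \<open>connected S\<close> connected_clopen by blast
  then show ?thesis
    using assms(2,3) by blast
qed

locale C1_scalar_field =
  fixes W :: "real^'n::finite \<Rightarrow> real" and DW :: "real^'n \<Rightarrow> real^'n \<Rightarrow> real"
  assumes has_derivative_W: "(W has_derivative DW x) (at x)"
    and continuous_on_DW: "continuous_on UNIV (\<lambda>x. DW x v)"
begin

lemma linear_DW: "linear (DW x)"
  using has_derivative_W by (rule has_derivative_linear)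

lemma continuous_on_W: "continuous_on UNIV W"
  using has_derivative_W by (meson continuous_at_imp_continuous_on has_derivative_continuous)

lemma continuous_on_DW_comp:
  assumes "continuous_on UNIV g"
  shows "continuous_on UNIV (\<lambda>x. DW x (g x))"
proof -
  have "DW x (g x) = (\<Sum>i\<in>Basis. (g x \<bullet> i) * DW x i)" for x
    using linear_DW[of x] by (subst euclidean_representation[symmetric, of "g x"])
      (simp add: linear_sum linear_scale)
  then show ?thesis
    using assms continuous_on_DW by (simp, intro continuous_intros) auto
qed

lemma has_real_derivative_W_comp:
  assumes "(\<phi> has_vector_derivative v) (at t within T)"
  shows "((\<lambda>s. W (\<phi> s)) has_real_derivative DW (\<phi> t) v) (at t within T)"
  using vector_derivative_diff_chain_within[OF assms has_derivative_at_withinI[OF has_derivative_W]]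
  by (simp add: has_real_derivative_iff_has_vector_derivative o_def)

lemma max_domain_pos_and_decreasing:
  assumes "x \<in> max_domain W f" "x \<noteq> 0"
  shows "0 < W x" "DW x (f x) < 0"
proof -
  have "frechet_derivative W (at x) = DW x"
    using has_derivative_W by (rule frechet_derivative_at[symmetric])
  with assms show "0 < W x" "DW x (f x) < 0"
    unfolding max_domain_def by force+
qed

lemma admissible_frontier:
  assumes "admissible W f c S" "q \<in> frontier S"
  shows "W q = c" "q \<in> S" "q \<noteq> 0" "DW q (f q) < 0"
proof -
  show "W q = c" "q \<in> S" "q \<noteq> 0"
    using assms unfolding admissible_def frontier_def by (auto simp: closure_closed)
  with assms show "DW q (f q) < 0"
    using max_domain_pos_and_decreasing(2) unfolding admissible_def by blast
qed

lemma W_decreases_along_ray: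
  assumes "0 < t" and "\<And>s. s \<in> {0..t} \<Longrightarrow> DW (z + s *\<^sub>R v) v < 0"
  shows "W (z + t *\<^sub>R v) < W z"
proof -
  have "((\<lambda>s. W (z + s *\<^sub>R v)) has_derivative (\<lambda>u. DW (z + s *\<^sub>R v) (u *\<^sub>R v))) (at s within {0..t})" for s
  proof -
    have "((\<lambda>s. z + s *\<^sub>R v) has_derivative (\<lambda>u. u *\<^sub>R v)) (at s within {0..t})"
      by (auto intro!: derivative_eq_intros)
    from has_derivative_compose[OF this has_derivative_at_withinI[OF has_derivative_W]]
    show ?thesis by (simp add: o_def)
  qed
  from mvt_simple[OF \<open>0 < t\<close> this] obtain \<xi> where "\<xi> \<in> {0<..<t}"
    and "W (z + t *\<^sub>R v) - W z = DW (z + \<xi> *\<^sub>R v) (t *\<^sub>R v)"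
    by auto
  moreover have "DW (z + \<xi> *\<^sub>R v) (t *\<^sub>R v) = t * DW (z + \<xi> *\<^sub>R v) v"
    using linear_DW by (simp add: linear_scale)
  moreover have "t * DW (z + \<xi> *\<^sub>R v) v < 0"
    using assms \<open>\<xi> \<in> {0<..<t}\<close> by (simp add: mult_pos_neg)
  ultimately show ?thesis
    by simp
qed

lemma W_decreasing_near_regular_point:
  assumes "DW q v < 0"
  obtains r \<tau> where "0 < r" "0 < \<tau>"
    "\<And>z t. dist z q < r \<Longrightarrow> 0 < t \<Longrightarrow> t \<le> \<tau> \<Longrightarrow> W (z + t *\<^sub>R v) < W z"
proof -
  have "open {z. DW z v < 0}"
    by (rule open_Collect_less[OF continuous_on_DW continuous_on_const])
  then obtain r0 where "0 < r0" and r0: "ball q r0 \<subseteq> {z. DW z v < 0}"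
    using assms open_contains_ball by blast
  define r where "r = r0 / 2"
  have "v \<noteq> 0"
    using assms linear_0[OF linear_DW] by auto
  define \<tau> where "\<tau> = r / norm v"
  have "0 < r" "0 < \<tau>"
    using \<open>0 < r0\<close> \<open>v \<noteq> 0\<close> by (simp_all add: r_def \<tau>_def)
  have "W (z + t *\<^sub>R v) < W z" if "dist z q < r" "0 < t" "t \<le> \<tau>" for z t
  proof (rule W_decreases_along_ray[OF \<open>0 < t\<close>])
    fix s assume s: "s \<in> {0..t}"
    then have "norm (s *\<^sub>R v) \<le> \<tau> * norm v"
      using \<open>t \<le> \<tau>\<close> by (auto intro: mult_right_mono)
    then have "dist (z + s *\<^sub>R v) q < r0"
      using \<open>dist z q < r\<close> \<open>v \<noteq> 0\<close> norm_triangle_ineq[of "z - q" "s *\<^sub>R v"]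
      by (simp add: r_def \<tau>_def dist_norm algebra_simps)
    then show "DW (z + s *\<^sub>R v) v < 0"
      using r0 by (auto simp: dist_commute)
  qed
  with \<open>0 < r\<close> \<open>0 < \<tau>\<close> show ?thesis
    using that by blast
qed

lemma start_in_closure_of_ray:
  fixes z v :: "'a::real_normed_vector"
  assumes "0 < \<tau>"
  shows "z \<in> closure ((\<lambda>t. z + t *\<^sub>R v) ` {0<..\<tau>})"
proof -
  have "\<forall>\<^sub>F t in at_right 0. z + t *\<^sub>R v \<in> closure ((\<lambda>t. z + t *\<^sub>R v) ` {0<..\<tau>})"
    using assms closure_subset unfolding eventually_at_right_field by fastforce
  moreover have "((\<lambda>t. z + t *\<^sub>R v) \<longlongrightarrow> z + 0 *\<^sub>R v) (at_right 0)"
    by (intro tendsto_add tendsto_const tendsto_scaleR tendsto_ident_at)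
  ultimately show ?thesis
    by (intro Lim_in_closed_set[OF closed_closure _ trivial_limit_at_right_real]) auto
qed

lemma sublevel_set_near_regular_point:
  assumes "W q = c" "DW q v < 0"
  obtains \<epsilon> \<Omega> where "0 < \<epsilon>" "connected \<Omega>" "\<Omega> \<subseteq> {z. W z < c}"
    "ball q \<epsilon> \<inter> {z. W z < c} \<subseteq> \<Omega>" "ball q \<epsilon> \<inter> {z. W z \<le> c} \<subseteq> closure \<Omega>"
proof -
  obtain r \<tau> where "0 < r" "0 < \<tau>"
    and decreasing: "\<And>z t. dist z q < r \<Longrightarrow> 0 < t \<Longrightarrow> t \<le> \<tau> \<Longrightarrow> W (z + t *\<^sub>R v) < W z"
    using W_decreasing_near_regular_point[OF assms(2)] by blast
  define p where "p = q + \<tau> *\<^sub>R v"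
  have "W p < c"
    using decreasing[of q \<tau>] \<open>0 < r\<close> \<open>0 < \<tau>\<close> assms(1) by (simp add: p_def)
  moreover have "open {z. W z < c}"
    by (rule open_Collect_less[OF continuous_on_W continuous_on_const])
  ultimately obtain e where "0 < e" and e: "ball p e \<subseteq> {z. W z < c}"
    using open_contains_ball by blast
  define \<epsilon> where "\<epsilon> = min e r"
  define Z where "Z = ball q \<epsilon> \<inter> {z. W z \<le> c}"
  \<comment> \<open>The ray from a point of \<open>Z\<close> runs inside \<open>{z. W z < c}\<close>, except possibly for its start,
    and ends in the ball around \<open>p\<close>, which connects all the rays.\<close>
  define ray where "ray z = (\<lambda>t. z + t *\<^sub>R v) ` (if W z < c then {0..\<tau>} else {0<..\<tau>})" for z
  define \<Omega> where "\<Omega> = (\<Union>z\<in>Z. ball p \<epsilon> \<union> ray z)"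
  have "0 < \<epsilon>"
    using \<open>0 < e\<close> \<open>0 < r\<close> by (simp add: \<epsilon>_def)
  have "connected (ball p \<epsilon> \<union> ray z)" if "z \<in> Z" for z
  proof (rule connected_Un)
    show "connected (ray z)"
      unfolding ray_def by (intro connected_continuous_image continuous_intros) (auto simp: is_interval_connected_1)
    have "z + \<tau> *\<^sub>R v \<in> ball p \<epsilon> \<inter> ray z"
      using that \<open>0 < \<tau>\<close> by (auto simp: Z_def p_def ray_def dist_norm norm_minus_commute)
    then show "ball p \<epsilon> \<inter> ray z \<noteq> {}"
      by blast
  qed simp
  moreover have "q \<in> Z"
    using assms(1) \<open>0 < \<epsilon>\<close> by (simp add: Z_def)
  ultimately have "connected \<Omega>"
    unfolding \<Omega>_def using \<open>0 < \<epsilon>\<close> by (intro connected_Union) auto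
  moreover have "ray z \<subseteq> {z. W z < c}" if "z \<in> Z" for z
  proof
    fix w assume "w \<in> ray z"
    then obtain t where w: "w = z + t *\<^sub>R v" and t: "t \<in> (if W z < c then {0..\<tau>} else {0<..\<tau>})"
      by (auto simp: ray_def)
    have "W w < c" if "0 < t"
      using decreasing[of z t] \<open>z \<in> Z\<close> w t that by (auto simp: Z_def \<epsilon>_def dist_commute split: if_splits)
    moreover have "W w < c" if "t = 0"
      using w t that by (simp split: if_splits)
    ultimately show "w \<in> {z. W z < c}"
      using t by (force split: if_splits)
  qed
  then have "\<Omega> \<subseteq> {z. W z < c}"
    using e by (auto simp: \<Omega>_def \<epsilon>_def)
  moreover have "ball q \<epsilon> \<inter> {z. W z < c} \<subseteq> \<Omega>"
  proof
    fix z assume z: "z \<in> ball q \<epsilon> \<inter> {z. W z < c}"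
    then have "z \<in> ray z"
      unfolding ray_def using \<open>0 < \<tau>\<close> by (intro image_eqI[of _ _ 0]) auto
    moreover have "z \<in> Z"
      using z by (simp add: Z_def)
    ultimately show "z \<in> \<Omega>"
      unfolding \<Omega>_def by blast
  qed
  moreover have "ball q \<epsilon> \<inter> {z. W z \<le> c} \<subseteq> closure \<Omega>"
  proof
    fix z assume "z \<in> ball q \<epsilon> \<inter> {z. W z \<le> c}"
    then have "z \<in> Z"
      by (simp add: Z_def)
    have "(\<lambda>t. z + t *\<^sub>R v) ` {0<..\<tau>} \<subseteq> ray z"
      unfolding ray_def by (intro image_mono) auto
    also have "\<dots> \<subseteq> \<Omega>"
      unfolding \<Omega>_def using \<open>z \<in> Z\<close> by blast
    finally show "z \<in> closure \<Omega>"
      using closure_mono start_in_closure_of_ray[OF \<open>0 < \<tau>\<close>, of z v] by blast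
  qed
  ultimately show ?thesis
    using that \<open>0 < \<epsilon>\<close> by blast
qed

lemma admissible_frontier_neighbourhood:
  assumes adm: "admissible W f c S" and q: "q \<in> frontier S" "q \<in> closure (interior S)"
  obtains \<epsilon> where "0 < \<epsilon>" "ball q \<epsilon> \<inter> {z. W z < c} \<subseteq> interior S"
    "ball q \<epsilon> \<inter> {z. W z \<le> c} \<subseteq> closure (interior S)"
proof -
  obtain \<epsilon> \<Omega> where "0 < \<epsilon>" "connected \<Omega>" and \<Omega>_below: "\<Omega> \<subseteq> {z. W z < c}"
    and \<Omega>_lt: "ball q \<epsilon> \<inter> {z. W z < c} \<subseteq> \<Omega>" and \<Omega>_le: "ball q \<epsilon> \<inter> {z. W z \<le> c} \<subseteq> closure \<Omega>"
    using sublevel_set_near_regular_point admissible_frontier(1,4)[OF adm q(1)] by metis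
  obtain y where "y \<in> interior S" "dist y q < \<epsilon>"
    using q(2) \<open>0 < \<epsilon>\<close> unfolding closure_approachable by blast
  moreover have "W y < c"
    using \<open>y \<in> interior S\<close> adm by (simp add: admissible_def)
  ultimately have "\<Omega> \<inter> interior S \<noteq> {}"
    using \<Omega>_lt by (auto simp: dist_commute)
  \<comment> \<open>\<open>\<Omega>\<close> avoids the level set \<open>W = c\<close>, hence the frontier of \<open>S\<close>, so it cannot leave \<open>S\<close>.\<close>
  moreover have "\<Omega> \<inter> frontier S = {}"
    using \<Omega>_below admissible_frontier(1)[OF adm] by fastforce
  ultimately have "\<Omega> \<subseteq> S"
    using connected_Int_frontier[OF \<open>connected \<Omega>\<close>] interior_subset by blast
  then have "\<Omega> \<subseteq> interior S"
    using \<open>\<Omega> \<inter> frontier S = {}\<close> adm by (auto simp: admissible_def frontier_def closure_closed)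
  then show ?thesis
    using that[OF \<open>0 < \<epsilon>\<close>] \<Omega>_lt \<Omega>_le closure_mono by blast
qed

lemma admissible_subset_closure_interior:
  assumes adm: "admissible W f c S"
  shows "S \<subseteq> closure (interior S)"
proof (rule connected_subset_closed_if_locally_subset)
  show "connected S" "0 \<in> S" "0 \<in> closure (interior S)"
    using adm interior_subset closure_subset by (auto simp: admissible_def)
  fix x assume x: "x \<in> S" "x \<in> closure (interior S)"
  show "\<exists>\<epsilon>>0. \<forall>y\<in>S. dist y x < \<epsilon> \<longrightarrow> y \<in> closure (interior S)"
  proof (cases "x \<in> interior S")
    case True
    then obtain \<epsilon> where "0 < \<epsilon>" "ball x \<epsilon> \<subseteq> interior S"
      using open_contains_ball open_interior by blast
    then show ?thesis
      using closure_subset by (force simp: dist_commute)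
  next
    case False
    with x have "x \<in> frontier S"
      using closure_subset by (auto simp: frontier_def)
    then obtain \<epsilon> where "0 < \<epsilon>" "ball x \<epsilon> \<inter> {z. W z \<le> c} \<subseteq> closure (interior S)"
      using admissible_frontier_neighbourhood[OF adm _ x(2)] by metis
    then show ?thesis
      using admissible_le[OF adm] by (force simp: dist_commute)
  qed
qed (simp add: closed_closure)

lemma admissible_interior_near:
  assumes adm: "admissible W f c S" and "q \<in> S"
  obtains \<epsilon> where "0 < \<epsilon>" "ball q \<epsilon> \<inter> {z. W z < c} \<subseteq> interior S"
proof (cases "q \<in> interior S")
  case True
  then obtain \<epsilon> where "0 < \<epsilon>" "ball q \<epsilon> \<subseteq> interior S"
    using open_contains_ball open_interior by blast
  then show ?thesis
    using that by blast
next
  case False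
  then have "q \<in> frontier S"
    using \<open>q \<in> S\<close> closure_subset by (auto simp: frontier_def)
  moreover have "q \<in> closure (interior S)"
    using admissible_subset_closure_interior[OF adm] \<open>q \<in> S\<close> by blast
  ultimately obtain \<epsilon> where "0 < \<epsilon>" "ball q \<epsilon> \<inter> {z. W z < c} \<subseteq> interior S"
    using admissible_frontier_neighbourhood[OF adm] by metis
  then show ?thesis
    using that by blast
qed

lemma admissible_mono:
  assumes adm1: "admissible W f c1 S1" and adm2: "admissible W f c2 S2" and "c1 \<le> c2"
  shows "S1 \<subseteq> S2"
proof (rule connected_subset_closed_if_locally_subset)
  show "connected S1" "0 \<in> S1" "0 \<in> S2" "closed S2"
    using adm1 adm2 interior_subset by (auto simp: admissible_def)
  fix x assume x: "x \<in> S1" "x \<in> S2"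
  show "\<exists>\<epsilon>>0. \<forall>y\<in>S1. dist y x < \<epsilon> \<longrightarrow> y \<in> S2"
  proof (cases "x \<in> interior S2")
    case True
    then obtain \<epsilon> where "0 < \<epsilon>" "ball x \<epsilon> \<subseteq> interior S2"
      using open_contains_ball open_interior by blast
    then show ?thesis
      using interior_subset by (force simp: dist_commute)
  next
    case False
    with x have "x \<in> frontier S2"
      using closure_subset by (auto simp: frontier_def)
    \<comment> \<open>A common boundary point forces equal levels: \<open>c2 = W x \<le> c1\<close>.\<close>
    then have "c1 = c2"
      using admissible_frontier(1)[OF adm2] admissible_le[OF adm1 x(1)] \<open>c1 \<le> c2\<close> by fastforce
    moreover have "x \<in> closure (interior S2)"
      using admissible_subset_closure_interior[OF adm2] x(2) by blast
    then obtain \<epsilon> where "0 < \<epsilon>" "ball x \<epsilon> \<inter> {z. W z \<le> c2} \<subseteq> closure (interior S2)"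
      using admissible_frontier_neighbourhood[OF adm2 \<open>x \<in> frontier S2\<close>] by metis
    moreover have "closure (interior S2) \<subseteq> S2"
      using adm2 interior_subset by (intro closure_minimal) (auto simp: admissible_def)
    ultimately have "ball x \<epsilon> \<inter> {z. W z \<le> c1} \<subseteq> S2"
      by blast
    then show ?thesis
      using \<open>0 < \<epsilon>\<close> admissible_le[OF adm1] by (intro exI[of _ \<epsilon>]) (auto simp: dist_commute)
  qed
qed

lemma admissible_nested:
  assumes "admissible W f c1 S1" "admissible W f c2 S2"
  shows "S1 \<subseteq> S2 \<or> S2 \<subseteq> S1"
  using admissible_mono[OF assms] admissible_mono[OF assms(2,1)] by (cases "c1 \<le> c2") auto

end

section \<open>Trajectories starting in admissible sets\<close>

lemma continuous_path_stays_in_closed_set: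
  fixes \<phi> :: "real \<Rightarrow> 'a::topological_space"
  assumes cont: "continuous_on {0..} \<phi>" and "closed S" "\<phi> 0 \<in> S"
    and step: "\<And>t. 0 \<le> t \<Longrightarrow> \<phi> t \<in> S \<Longrightarrow> \<forall>\<^sub>F s in at_right t. \<phi> s \<in> S"
    and "0 \<le> t"
  shows "\<phi> t \<in> S"
proof (rule ccontr)
  assume "\<phi> t \<notin> S"
  define E where "E = {s. 0 \<le> s \<and> \<phi> s \<notin> S}"
  define t0 where "t0 = Inf E"
  have "t \<in> E" "bdd_below E"
    using \<open>0 \<le> t\<close> \<open>\<phi> t \<notin> S\<close> by (auto simp: E_def bdd_below_def)
  then have "0 \<le> t0" and t0_le: "\<And>s. s \<in> E \<Longrightarrow> t0 \<le> s"
    unfolding t0_def by (auto intro: cInf_greatest cInf_lower simp: E_def)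
  have "\<phi> t0 \<in> S"
  proof (cases "t0 = 0")
    case False
    have "\<phi> ` {0..<t0} \<subseteq> S"
      using t0_le by (force simp: E_def)
    moreover have "continuous_on (closure {0..<t0}) \<phi>"
      using cont \<open>0 \<le> t0\<close> False by (auto intro: continuous_on_subset)
    ultimately have "\<phi> ` closure {0..<t0} \<subseteq> S"
      using image_closure_subset \<open>closed S\<close> by blast
    then show ?thesis
      using \<open>0 \<le> t0\<close> False by auto
  qed (use \<open>\<phi> 0 \<in> S\<close> in simp)
  then obtain b where "t0 < b" and b: "\<And>s. t0 < s \<Longrightarrow> s < b \<Longrightarrow> \<phi> s \<in> S"
    using step[OF \<open>0 \<le> t0\<close>] unfolding eventually_at_right_field by blast
  have "b \<le> t0"
    unfolding t0_def
  proof (rule cInf_greatest)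
    show "E \<noteq> {}" using \<open>t \<in> E\<close> by blast
    fix s assume "s \<in> E"
    with t0_le[OF this] b \<open>\<phi> t0 \<in> S\<close> show "b \<le> s"
      by (cases "s = t0") (force simp: E_def)+
  qed
  with \<open>t0 < b\<close> show False by simp
qed

lemma mvt_halfline:
  fixes h h' :: "real \<Rightarrow> real"
  assumes deriv: "\<And>t. 0 \<le> t \<Longrightarrow> (h has_real_derivative h' t) (at t within {0..})" and "0 \<le> a" "a < b"
  obtains \<xi> where "a < \<xi>" "\<xi> < b" "h b - h a = h' \<xi> * (b - a)"
proof -
  have "(h has_derivative (\<lambda>u. h' x * u)) (at x within {a..b})" if "a \<le> x" "x \<le> b" for x
    using has_field_derivative_subset[OF deriv] that \<open>0 \<le> a\<close>
    by (auto simp: has_field_derivative_def)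
  from mvt_simple[OF \<open>a < b\<close> this] show ?thesis
    using that by (auto simp: mult.commute)
qed

context C1_scalar_field
begin

lemma admissible_trajectory_eventually_below_level:
  assumes adm: "admissible W f c S" and cont: "continuous_on {0..} \<phi>"
    and deriv: "(\<phi> has_vector_derivative f (\<phi> t)) (at t within {0..})"
    and "0 \<le> t" "\<phi> t \<in> S"
  shows "\<forall>\<^sub>F s in at_right t. W (\<phi> s) < c"
proof (cases "W (\<phi> t) < c")
  case True
  have "(\<phi> \<longlongrightarrow> \<phi> t) (at_right t)"
    using cont \<open>0 \<le> t\<close> by (auto simp: continuous_on_def intro: tendsto_within_subset)
  then have "((\<lambda>s. W (\<phi> s)) \<longlongrightarrow> W (\<phi> t)) (at_right t)"
    using continuous_on_W by (auto intro: continuous_on_tendsto_compose[of UNIV])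
  then show ?thesis
    using True by (rule order_tendstoD)
next
  case False
  \<comment> \<open>On the level \<open>W = c\<close> the point is on the frontier, where \<open>W\<close> strictly decreases along the flow.\<close>
  then have "W (\<phi> t) = c" "\<phi> t \<notin> interior S"
    using admissible_le[OF adm \<open>\<phi> t \<in> S\<close>] adm by (auto simp: admissible_def)
  then have "\<phi> t \<in> frontier S"
    using \<open>\<phi> t \<in> S\<close> closure_subset by (auto simp: frontier_def)
  then have "DW (\<phi> t) (f (\<phi> t)) < 0"
    by (rule admissible_frontier(4)[OF adm])
  with has_real_derivative_W_comp[OF deriv]
  obtain d where "0 < d" and d: "\<And>h. 0 < h \<Longrightarrow> h < d \<Longrightarrow> W (\<phi> (t + h)) < W (\<phi> t)"
    using has_real_derivative_neg_dec_right \<open>0 \<le> t\<close> by (metis atLeast_iff add_nonneg_nonneg less_imp_le)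
  show ?thesis
    unfolding eventually_at_right_field
  proof (intro exI conjI allI impI)
    show "t < t + d" using \<open>0 < d\<close> by simp
    fix s assume "t < s" "s < t + d"
    then show "W (\<phi> s) < c"
      using d[of "s - t"] \<open>W (\<phi> t) = c\<close> by simp
  qed
qed

lemma admissible_forward_invariant:
  assumes adm: "admissible W f c S" and cont: "continuous_on {0..} \<phi>"
    and deriv: "\<And>t. 0 \<le> t \<Longrightarrow> \<phi> t \<in> S \<Longrightarrow> (\<phi> has_vector_derivative f (\<phi> t)) (at t within {0..})"
    and "\<phi> 0 \<in> S" "0 \<le> t"
  shows "\<phi> t \<in> S"
proof (rule continuous_path_stays_in_closed_set[OF cont _ \<open>\<phi> 0 \<in> S\<close> _ \<open>0 \<le> t\<close>])
  show "closed S"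
    using adm by (simp add: admissible_def)
  fix t assume "0 \<le> t" "\<phi> t \<in> S"
  obtain \<epsilon> where "0 < \<epsilon>" and \<epsilon>: "ball (\<phi> t) \<epsilon> \<inter> {z. W z < c} \<subseteq> interior S"
    using admissible_interior_near[OF adm \<open>\<phi> t \<in> S\<close>] by metis
  have "(\<phi> \<longlongrightarrow> \<phi> t) (at_right t)"
    using cont \<open>0 \<le> t\<close> by (auto simp: continuous_on_def intro: tendsto_within_subset)
  then have "\<forall>\<^sub>F s in at_right t. \<phi> s \<in> ball (\<phi> t) \<epsilon>"
    using \<open>0 < \<epsilon>\<close> by (auto simp: tendsto_iff dist_commute)
  moreover have "\<forall>\<^sub>F s in at_right t. W (\<phi> s) < c"
    using admissible_trajectory_eventually_below_level[OF adm cont deriv] \<open>0 \<le> t\<close> \<open>\<phi> t \<in> S\<close> by blast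
  ultimately show "\<forall>\<^sub>F s in at_right t. \<phi> s \<in> S"
    by eventually_elim (use \<epsilon> interior_subset in blast)
qed

context
  fixes f :: "real^'n \<Rightarrow> real^'n" and c S and \<phi> :: "real \<Rightarrow> real^'n"
  assumes adm: "admissible W f c S" and W_0: "W 0 = 0" and f_0: "f 0 = 0"
    and continuous_f: "continuous_on UNIV f"
    and deriv: "\<And>t. 0 \<le> t \<Longrightarrow> (\<phi> has_vector_derivative f (\<phi> t)) (at t within {0..})"
    and in_S: "\<And>t. 0 \<le> t \<Longrightarrow> \<phi> t \<in> S"
begin

private lemma W_trajectory_deriv:
  "0 \<le> t \<Longrightarrow> ((\<lambda>s. W (\<phi> s)) has_real_derivative DW (\<phi> t) (f (\<phi> t))) (at t within {0..})"
  using deriv by (rule has_real_derivative_W_comp)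

private lemma trajectory_in_max_domain: "0 \<le> t \<Longrightarrow> \<phi> t \<in> max_domain W f"
  using in_S adm by (auto simp: admissible_def)

private lemma W_trajectory_nonneg: "0 \<le> t \<Longrightarrow> 0 \<le> W (\<phi> t)"
  using max_domain_pos_and_decreasing(1)[OF trajectory_in_max_domain] W_0
  by (cases "\<phi> t = 0") (auto simp: less_imp_le)

private lemma DW_trajectory_nonpos: "0 \<le> t \<Longrightarrow> DW (\<phi> t) (f (\<phi> t)) \<le> 0"
  using max_domain_pos_and_decreasing(2)[OF trajectory_in_max_domain] f_0 linear_0[OF linear_DW]
  by (cases "\<phi> t = 0") (auto simp: less_imp_le)

private lemma W_trajectory_antimono:
  assumes "0 \<le> a" "a \<le> b"
  shows "W (\<phi> b) \<le> W (\<phi> a)"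
proof (cases "a = b")
  case False
  then obtain \<xi> where "a < \<xi>" "W (\<phi> b) - W (\<phi> a) = DW (\<phi> \<xi>) (f (\<phi> \<xi>)) * (b - a)"
    using mvt_halfline[OF W_trajectory_deriv] assms by (metis order_le_less)
  then show ?thesis
    using DW_trajectory_nonpos[of \<xi>] assms mult_nonpos_nonneg[of _ "b - a"] by fastforce
qed simp

private lemma W_trajectory_drops_below:
  assumes "0 < \<eta>"
  obtains t where "0 \<le> t" "W (\<phi> t) < \<eta>"
proof (rule ccontr)
  assume "\<not> thesis"
  with that have above: "\<eta> \<le> W (\<phi> t)" if "0 \<le> t" for t
    using that by force
  define K where "K = S \<inter> {x. \<eta> \<le> W x}"
  have "compact K"
    unfolding K_def using adm
    by (intro compact_Int_closed closed_Collect_le continuous_on_const continuous_on_W)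
      (auto simp: admissible_def)
  moreover have "\<phi> 0 \<in> K"
    using above[of 0] in_S[of 0] by (simp add: K_def)
  moreover have "continuous_on K (\<lambda>x. DW x (f x))"
    using continuous_on_DW_comp[OF continuous_f] by (rule continuous_on_subset) simp
  ultimately obtain xm where "xm \<in> K" and xm: "\<And>y. y \<in> K \<Longrightarrow> DW y (f y) \<le> DW xm (f xm)"
    using continuous_attains_sup[of K "\<lambda>x. DW x (f x)"] by blast
  define m where "m = DW xm (f xm)"
  \<comment> \<open>\<open>W\<close> decreases at the uniform rate \<open>-m > 0\<close> as long as \<open>W \<ge> \<eta>\<close>, so it would turn negative.\<close>
  have "xm \<noteq> 0"
    using \<open>xm \<in> K\<close> \<open>0 < \<eta>\<close> W_0 by (auto simp: K_def)
  then have "m < 0"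
    using max_domain_pos_and_decreasing(2) \<open>xm \<in> K\<close> adm by (auto simp: K_def m_def admissible_def)
  define T where "T = (W (\<phi> 0) + 1) / - m"
  have "0 < T"
    using \<open>m < 0\<close> W_trajectory_nonneg[of 0] by (simp add: T_def field_simps)
  then obtain \<xi> where "0 < \<xi>" "W (\<phi> T) - W (\<phi> 0) = DW (\<phi> \<xi>) (f (\<phi> \<xi>)) * T"
    using mvt_halfline[OF W_trajectory_deriv, of 0 T] by auto
  moreover have "DW (\<phi> \<xi>) (f (\<phi> \<xi>)) \<le> m"
    using xm above[of \<xi>] in_S[of \<xi>] \<open>0 < \<xi>\<close> by (simp add: K_def m_def)
  then have "DW (\<phi> \<xi>) (f (\<phi> \<xi>)) * T \<le> m * T"
    using \<open>0 < T\<close> by (simp add: mult_right_mono)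
  ultimately have "W (\<phi> T) \<le> W (\<phi> 0) + m * T"
    by simp
  also have "\<dots> = -1"
    using \<open>m < 0\<close> by (simp add: T_def field_simps)
  finally show False
    using W_trajectory_nonneg[of T] \<open>0 < T\<close> by simp
qed

lemma admissible_trajectory_tendsto_0: "(\<phi> \<longlongrightarrow> 0) at_top"
  unfolding tendsto_iff
proof (intro allI impI)
  fix e :: real assume "0 < e"
  define K where "K = S \<inter> {x. e \<le> norm x}"
  show "\<forall>\<^sub>F t in at_top. dist (\<phi> t) 0 < e"
  proof (cases "K = {}")
    case True
    then show ?thesis
      using in_S by (force simp: K_def eventually_at_top_linorder)
  next
    case False
    have "compact K"
      unfolding K_def using adm
      by (intro compact_Int_closed closed_Collect_le continuous_on_const continuous_on_norm_id)
        (auto simp: admissible_def)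
    then obtain xm where "xm \<in> K" and xm: "\<And>y. y \<in> K \<Longrightarrow> W xm \<le> W y"
      using continuous_attains_inf[OF _ False continuous_on_subset[OF continuous_on_W]] by blast
    have "xm \<noteq> 0"
      using \<open>xm \<in> K\<close> \<open>0 < e\<close> by (auto simp: K_def)
    then have "0 < W xm"
      using max_domain_pos_and_decreasing(1) \<open>xm \<in> K\<close> adm by (auto simp: K_def admissible_def)
    then obtain t1 where "0 \<le> t1" "W (\<phi> t1) < W xm"
      by (rule W_trajectory_drops_below)
    have "dist (\<phi> t) 0 < e" if "t1 \<le> t" for t
    proof (rule ccontr)
      assume "\<not> dist (\<phi> t) 0 < e"
      then have "\<phi> t \<in> K"
        using in_S[of t] that \<open>0 \<le> t1\<close> by (auto simp: K_def)
      then show False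
        using xm W_trajectory_antimono[OF \<open>0 \<le> t1\<close> that] \<open>W (\<phi> t1) < W xm\<close> by fastforce
    qed
    then show ?thesis
      unfolding eventually_at_top_linorder by blast
  qed
qed

end

lemma admissible_subset_domain_of_attraction:
  assumes f_lipschitz: "local_lipschitz (UNIV :: real set) UNIV (\<lambda>_. f)"
    and "f 0 = 0" "W 0 = 0" and adm: "admissible W f c S"
  shows "S \<subseteq> domain_of_attraction f"
proof
  fix x0 assume "x0 \<in> S"
  have "bounded S"
    using adm by (simp add: admissible_def compact_imp_bounded)
  then obtain g L where "L-lipschitz_on UNIV g" and g_eq: "\<And>x. x \<in> S \<Longrightarrow> g x = f x"
    using local_lipschitz_extension_from_bounded[OF f_lipschitz] by metis
  then obtain \<phi> where "\<phi> 0 = x0"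
    and \<phi>_deriv: "\<And>t. 0 \<le> t \<Longrightarrow> (\<phi> has_vector_derivative g (\<phi> t)) (at t within {0..})"
    using lipschitz_ode_solution_exists[of L g x0] by blast
  have "continuous_on {0..} \<phi>"
    using has_vector_derivative_continuous[OF \<phi>_deriv] by (auto simp: continuous_on_eq_continuous_within)
  then have in_S: "\<phi> t \<in> S" if "0 \<le> t" for t
    using admissible_forward_invariant[OF adm] \<phi>_deriv g_eq \<open>\<phi> 0 = x0\<close> \<open>x0 \<in> S\<close> that by metis
  moreover have "continuous_on UNIV f"
    using local_lipschitz_continuous_on[OF f_lipschitz] by blast
  ultimately have "(\<phi> \<longlongrightarrow> 0) at_top"
    using admissible_trajectory_tendsto_0[OF adm \<open>W 0 = 0\<close> \<open>f 0 = 0\<close>] \<phi>_deriv g_eq by metis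
  then show "x0 \<in> domain_of_attraction f"
    unfolding domain_of_attraction_def using \<phi>_deriv g_eq in_S \<open>\<phi> 0 = x0\<close> by auto
qed

end

lemma C1_scalar_field_taylor_poly: "C1_scalar_field (taylor_poly c p) (taylor_poly_deriv c p)"
  by unfold_locales (rule has_derivative_taylor_poly continuous_on_taylor_poly_deriv)+

theorem corollary2p4:
  fixes f :: "real^'n \<Rightarrow> real^'n"
    and A :: "real^'n^'n"
    and V :: "real^'n \<Rightarrow> real"
    and DV :: "real^'n \<Rightarrow> real^'n \<Rightarrow> real"
    and U :: "(real^'n) set"
    and c :: "('n \<Rightarrow> nat) \<Rightarrow> real"
    and p :: nat
  assumes f_analytic: "real_analytic_vf f"
    and f0: "f 0 = 0"
    and A_deriv: "(f has_derivative (\<lambda>h. A *v h)) (at 0)"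
    and A_hurwitz: "\<And>mu. complex_eigenvalue A mu \<Longrightarrow> Re mu < 0"
    and U_open: "open U" and U0: "0 \<in> U"
    and V_analytic: "real_analytic_on V U"
    and V_deriv: "\<And>x. x \<in> U \<Longrightarrow> (V has_derivative DV x) (at x)"
    and V_eq: "\<And>x. x \<in> U \<Longrightarrow> DV x (f x) = - ((norm x) ^ 2)"
    and V0: "V 0 = 0"
    and V_series: "power_series_at0 c V"
    and p2: "p \<ge> 2"
  shows "(\<forall>c1 c2 S1 S2. c1 > 0 \<longrightarrow> c2 > 0 \<longrightarrow>
            admissible (taylor_poly c p) f c1 S1 \<longrightarrow> admissible (taylor_poly c p) f c2 S2 \<longrightarrow>
            S1 \<subseteq> S2 \<or> S2 \<subseteq> S1)
       \<and> \<Union>{S. \<exists>c'>0. admissible (taylor_poly c p) f c' S} \<subseteq> domain_of_attraction f"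
proof -
  interpret taylor: C1_scalar_field "taylor_poly c p" "taylor_poly_deriv c p"
    by (rule C1_scalar_field_taylor_poly)
  have "admissible (taylor_poly c p) f c' S \<Longrightarrow> S \<subseteq> domain_of_attraction f" for c' S
    using real_analytic_vf_local_lipschitz[OF f_analytic] f0 taylor_poly_0
    by (rule taylor.admissible_subset_domain_of_attraction)
  then show ?thesis
    using taylor.admissible_nested by (intro conjI allI impI Sup_least) auto
qed

end
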